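(* Let $M$ be a matroid on ground set $S$, let $g\geq 3$ be an integer, and let $\mathcal{C}$ be a family of circuits of $M$ such that for every $1\leq i\leq g-1$ and every $X\subseteq S$ with $|X|=i$ we have $|\{C\in\mathcal{C}:\ |X\cap C|\geq 2\}|\leq i-1$. Then in any rainbow circuit-free coloring of $M$ in which each color is used at most $g-1$ times, the number $q$ of distinct colors satisfies $|\mathcal{C}|/(g-2)\leq q\leq |S|-|\mathcal{C}|$.
   Context: A coloring of $S$ is a partition of $S$ into nonempty color classes; it is rainbow circuit-free if no circuit of $M$ has all its elements of pairwise different colors. *)

theory Defs
  imports Complex_Main "HOL-Library.Disjoint_Sets"
begin

definition matroid :: "'a set \<Rightarrow> ('a set \<Rightarrow> bool) \<Rightarrow> bool" where
  "matroid S indep \<longleftrightarrow>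
     finite S \<and>
     (\<forall>X. indep X \<longrightarrow> X \<subseteq> S) \<and>
     indep {} \<and>
     (\<forall>X Y. indep X \<and> Y \<subseteq> X \<longrightarrow> indep Y) \<and>
     (\<forall>X Y. indep X \<and> indep Y \<and> card X < card Y \<longrightarrow>
        (\<exists>y\<in>Y - X. indep (insert y X)))"

definition circuit :: "'a set \<Rightarrow> ('a set \<Rightarrow> bool) \<Rightarrow> 'a set \<Rightarrow> bool" where
  "circuit S indep C \<longleftrightarrow> C \<subseteq> S \<and> \<not> indep C \<and> (\<forall>x\<in>C. indep (C - {x}))"

definition coloring :: "'a set \<Rightarrow> 'a set set \<Rightarrow> bool" where
  "coloring S P \<longleftrightarrow> partition_on S P"

definition rainbow_circuit_free :: "'a set \<Rightarrow> ('a set \<Rightarrow> bool) \<Rightarrow> 'a set set \<Rightarrow> bool" where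
  "rainbow_circuit_free S indep P \<longleftrightarrow>
     coloring S P \<and>
     \<not> (\<exists>C. circuit S indep C \<and> (\<forall>x\<in>C. \<forall>y\<in>C. x \<noteq> y \<longrightarrow>
              (\<forall>B\<in>P. \<not> (x \<in> B \<and> y \<in> B))))"

end

theory Submission
  imports Defs
begin

(* Rainbow circuit-freeness forces every circuit of the family to meet some colour class B in
   at least two elements, and the hypothesis on the family, applied to X = B, says that B does so
   for at most |B| - 1 of them. Hence |C| is at most the sum of |B| - 1 over the q colour classes,
   which equals |S| - q, and each summand is at most g - 2. *)

lemma matroid_finite: "matroid S indep \<Longrightarrow> finite S"
  unfolding matroid_def by blast

lemma rainbow_circuit_free_circuitE:
  assumes "rainbow_circuit_free S indep P" "circuit S indep C" "finite S"
  obtains B where "B \<in> P" "2 \<le> card (B \<inter> C)"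
proof -
  obtain x y B where xy: "x \<in> C" "y \<in> C" "x \<noteq> y" "B \<in> P" "x \<in> B" "y \<in> B"
    using assms(1,2) unfolding rainbow_circuit_free_def by blast
  have "finite (B \<inter> C)"
    using assms(2,3) unfolding circuit_def by (blast intro: finite_subset)
  then have "card {x, y} \<le> card (B \<inter> C)"
    using xy by (intro card_mono) auto
  with xy show thesis
    using that by simp
qed

lemma card_le_sum_card_related:
  assumes "finite I" "\<forall>a\<in>A. \<exists>i\<in>I. R i a"
  shows "card A \<le> (\<Sum>i\<in>I. card {a\<in>A. R i a})"
proof -
  have "A = (\<Union>i\<in>I. {a\<in>A. R i a})"
    using assms(2) by blast
  then have "card A = card (\<Union>i\<in>I. {a\<in>A. R i a})"
    by simp
  also have "\<dots> \<le> (\<Sum>i\<in>I. card {a\<in>A. R i a})"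
    using assms(1) by (rule card_UN_le)
  finally show ?thesis .
qed

lemma partition_on_block_finite_nonempty:
  assumes "finite S" "partition_on S P" "B \<in> P"
  shows "finite B" "1 \<le> card B"
  using assms partition_onD1[OF assms(2)] partition_onD3[OF assms(2)]
  by (auto intro: finite_subset simp: Suc_le_eq card_gt_0_iff)

lemma partition_on_sum_card_pred:
  assumes "finite S" "partition_on S P"
  shows "(\<Sum>B\<in>P. card B - 1) + card P = card S"
proof -
  note fin = partition_on_block_finite_nonempty(1)[OF assms]
  note pos = partition_on_block_finite_nonempty(2)[OF assms]
  have "(\<Sum>B\<in>P. card B - 1) + card P = (\<Sum>B\<in>P. card B - 1 + 1)"
    by (simp only: sum.distrib) simp
  also have "\<dots> = (\<Sum>B\<in>P. card B)"
    by (intro sum.cong) (auto dest: pos)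
  also have "\<dots> = card S"
    using product_partition[OF assms(2) fin] by simp
  finally show ?thesis .
qed

theorem theorem7:
  fixes S :: "'a set" and indep :: "'a set \<Rightarrow> bool" and g :: nat
    and \<C> :: "'a set set" and P :: "'a set set"
  assumes "matroid S indep"
    and "g \<ge> 3"
    and "\<forall>C\<in>\<C>. circuit S indep C"
    and "\<forall>i. 1 \<le> i \<and> i \<le> g - 1 \<longrightarrow>
           (\<forall>X. X \<subseteq> S \<and> card X = i \<longrightarrow> card {C\<in>\<C>. card (X \<inter> C) \<ge> 2} \<le> i - 1)"
    and "rainbow_circuit_free S indep P"
    and "\<forall>B\<in>P. card B \<le> g - 1"
  shows "real (card \<C>) / real (g - 2) \<le> real (card P) \<and>
         real (card P) \<le> real (card S) - real (card \<C>)"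
proof -
  have fin: "finite S" using assms(1) by (rule matroid_finite)
  have part: "partition_on S P"
    using assms(5) unfolding rainbow_circuit_free_def coloring_def by blast
  have "\<forall>C\<in>\<C>. \<exists>B\<in>P. 2 \<le> card (B \<inter> C)"
    using rainbow_circuit_free_circuitE[OF assms(5) _ fin] assms(3) by metis
  then have "card \<C> \<le> (\<Sum>B\<in>P. card {C\<in>\<C>. 2 \<le> card (B \<inter> C)})"
    by (rule card_le_sum_card_related[OF finite_elements[OF fin part]])
  also have "\<dots> \<le> (\<Sum>B\<in>P. card B - 1)"
  proof (rule sum_mono)
    fix B assume "B \<in> P"
    moreover have "1 \<le> card B"
      using \<open>B \<in> P\<close> by (rule partition_on_block_finite_nonempty(2)[OF fin part])
    ultimately show "card {C\<in>\<C>. 2 \<le> card (B \<inter> C)} \<le> card B - 1"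
      using assms(4,6) partition_onD1[OF part] by blast
  qed
  finally have deficiency: "card \<C> \<le> (\<Sum>B\<in>P. card B - 1)" .
  have "(\<Sum>B\<in>P. card B - 1) \<le> card P * (g - 2)"
    using sum_bounded_above[of P "\<lambda>B. card B - 1" "g - 2"] assms(6) by force
  with deficiency have "real (card \<C>) \<le> real (card P) * real (g - 2)"
    by (metis le_trans of_nat_le_iff of_nat_mult)
  moreover have "card \<C> + card P \<le> card S"
    using deficiency partition_on_sum_card_pred[OF fin part] by linarith
  ultimately show ?thesis
    using assms(2) by (simp add: divide_le_eq)
qed

end
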